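(* Let $M,N$ be positive integers and $C_0,\dots,C_{N-1}\in\{0,1,\dots,M-1\}$. For $p\in\{0,\dots,M-1\}$, $q\in\{0,\dots,N-1\}$ let $\bm\psi_{p,q}\in\mathbb{C}^N$ have entries $[\bm\psi_{p,q}]_n=\frac{1}{\sqrt N}e^{j\frac{2\pi p}{M}C_n+j\frac{2\pi q}{N}n}$, $n=0,\dots,N-1$, and let $\bm\Psi_q=[\bm\psi_{0,q},\dots,\bm\psi_{M-1,q}]\in\mathbb{C}^{N\times M}$. Then for all $q_1,q_2\in\{0,\dots,N-1\}$ the matrix $\bm X_{q_1,q_2}:=\bm\Psi_{q_1}^H\bm\Psi_{q_2}\in\mathbb{C}^{M\times M}$ is a circulant matrix.
   Context: $j$ denotes the imaginary unit and $(\cdot)^H$ the conjugate transpose. A circulant matrix is a square matrix in which each row is obtained from the preceding row by a cyclic shift one position to the right, i.e. $[\bm A]_{p_1,p_2}=[\bm A]_{0,(p_2-p_1)\bmod M}$. *)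

theory Defs
  imports "Jordan_Normal_Form.Schur_Decomposition"
begin

definition psi :: "nat \<Rightarrow> nat \<Rightarrow> (nat \<Rightarrow> nat) \<Rightarrow> nat \<Rightarrow> nat \<Rightarrow> complex vec" where
  "psi M N C p q = vec N (\<lambda>n. complex_of_real (1 / sqrt (real N)) *
      exp (\<i> * complex_of_real (2 * pi * real p / real M) * of_nat (C n)
         + \<i> * complex_of_real (2 * pi * real q / real N) * of_nat n))"

definition Psi :: "nat \<Rightarrow> nat \<Rightarrow> (nat \<Rightarrow> nat) \<Rightarrow> nat \<Rightarrow> complex mat" where
  "Psi M N C q = mat_of_cols N (map (\<lambda>p. psi M N C p q) [0..<M])"

definition circulant :: "'a mat \<Rightarrow> bool" where
  "circulant A \<longleftrightarrow> dim_row A = dim_col A \<and>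
     (\<forall>p1 < dim_row A. \<forall>p2 < dim_row A.
        A $$ (p1, p2) = A $$ (0, nat ((int p2 - int p1) mod int (dim_row A))))"

end

theory Submission imports Defs begin

(* Entrywise, (Psi_q1^H Psi_q2)_{p1,p2} = 1/N sum_n e^{j 2 pi (p2 - p1) C_n / M} e^{j 2 pi (q2 - q1) n / N},
   which depends on (p1, p2) only through p2 - p1, and only modulo M since every C_n is an integer. *)

lemma circulantI:
  assumes "A \<in> carrier_mat n n"
    and "\<And>i j. i < n \<Longrightarrow> j < n \<Longrightarrow> A $$ (i, j) = f ((int j - int i) mod int n)"
  shows "circulant A"
proof -
  have "A $$ (i, j) = A $$ (0, nat ((int j - int i) mod int n))" if "i < n" "j < n" for i j
  proof -
    let ?d = "(int j - int i) mod int n"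
    have "0 \<le> ?d" "?d < int n" using that by simp_all
    then have "nat ?d < n" by linarith
    then show ?thesis using assms(2)[of i j] assms(2)[of 0 "nat ?d"] that by simp
  qed
  then show ?thesis using assms(1) unfolding circulant_def by auto
qed

lemma mat_adjoint_carrier: "A \<in> carrier_mat n m \<Longrightarrow> mat_adjoint A \<in> carrier_mat m n"
  unfolding mat_adjoint_def by (rule carrier_matI) auto

lemma index_mat_adjoint_mult:
  assumes "A \<in> carrier_mat n m" "B \<in> carrier_mat n k" "i < m" "j < k"
  shows "(mat_adjoint A * B) $$ (i, j) = conjugate (col A i) \<bullet> col B j"
  using assms unfolding mat_adjoint_def by simp

lemma cis_2pi_times_int_mod:
  fixes k c :: int
  shows "cis (2 * pi * (of_int k * of_int c / real M))
    = cis (2 * pi * (of_int (k mod int M) * of_int c / real M))"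
proof (cases "M = 0")
  case False
  have "real_of_int k = of_int (k mod int M) + real M * of_int (k div int M)"
    by (metis mod_mult_div_eq of_int_add of_int_mult of_int_of_nat_eq)
  then have "of_int k * of_int c / real M
      = of_int (k mod int M) * of_int c / real M + of_int (k div int M * c)"
    using False by (simp add: field_simps)
  then show ?thesis by (simp add: distrib_left flip: cis_mult)
qed simp

lemma psi_index_cis:
  assumes "n < N"
  shows "psi M N C p q $ n = of_real (1 / sqrt (real N))
    * cis (2 * pi * (real p * real (C n) / real M)) * cis (2 * pi * (real q * real n / real N))"
  using assms by (simp add: psi_def cis_conv_exp exp_add mult_ac)

lemma cnj_psi_mult_psi:
  assumes "n < N"
  shows "cnj (psi M N C i q1 $ n) * psi M N C j q2 $ n = of_real (1 / real N)
    * cis (2 * pi * (of_int (int j - int i) * real (C n) / real M))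
    * cis (2 * pi * ((real q2 - real q1) * real n / real N))"
proof -
  have scale: "of_real (1 / sqrt (real N)) * of_real (1 / sqrt (real N)) = (of_real (1 / real N) :: complex)"
    by (simp flip: of_real_mult add: real_sqrt_mult[symmetric])
  have "2 * pi * (of_int (int j - int i) * real (C n) / real M)
      = 2 * pi * (real j * real (C n) / real M) + - (2 * pi * (real i * real (C n) / real M))"
    "2 * pi * ((real q2 - real q1) * real n / real N)
      = 2 * pi * (real q2 * real n / real N) + - (2 * pi * (real q1 * real n / real N))"
    by (simp_all add: algebra_simps diff_divide_distrib)
  then show ?thesis
    using assms by (simp only: psi_index_cis complex_cnj_mult complex_cnj_complex_of_real cis_cnj
        flip: cis_mult scale) (simp only: mult_ac)
qed

definition gram_kernel :: "nat \<Rightarrow> nat \<Rightarrow> (nat \<Rightarrow> nat) \<Rightarrow> nat \<Rightarrow> nat \<Rightarrow> int \<Rightarrow> complex" where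
  "gram_kernel M N C q1 q2 k = (\<Sum>n<N. of_real (1 / real N)
     * cis (2 * pi * (of_int k * real (C n) / real M))
     * cis (2 * pi * ((real q2 - real q1) * real n / real N)))"

lemma gram_kernel_mod: "gram_kernel M N C q1 q2 (k mod int M) = gram_kernel M N C q1 q2 k"
  unfolding gram_kernel_def
  by (rule sum.cong[OF refl]) (metis cis_2pi_times_int_mod of_int_of_nat_eq)

lemma Psi_carrier: "Psi M N C q \<in> carrier_mat N M"
  unfolding Psi_def by (rule carrier_matI) simp_all

lemma col_Psi: "p < M \<Longrightarrow> col (Psi M N C q) p = psi M N C p q"
  unfolding Psi_def by (simp add: psi_def)

lemma Psi_gram_entry:
  assumes "i < M" "j < M"
  shows "(mat_adjoint (Psi M N C q1) * Psi M N C q2) $$ (i, j) = gram_kernel M N C q1 q2 (int j - int i)"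
proof -
  have "(mat_adjoint (Psi M N C q1) * Psi M N C q2) $$ (i, j)
      = (\<Sum>n<N. cnj (psi M N C i q1 $ n) * psi M N C j q2 $ n)"
    using assms by (simp add: index_mat_adjoint_mult[OF Psi_carrier Psi_carrier] col_Psi
        scalar_prod_def lessThan_atLeast0) (simp add: psi_def)
  also have "\<dots> = gram_kernel M N C q1 q2 (int j - int i)"
    unfolding gram_kernel_def by (simp add: cnj_psi_mult_psi)
  finally show ?thesis .
qed

theorem lemma1:
  fixes M N :: nat and C :: "nat \<Rightarrow> nat" and q1 q2 :: nat
  assumes "M > 0" and "N > 0"
    and "\<forall>n < N. C n < M"
    and "q1 < N" and "q2 < N"
  shows "circulant (mat_adjoint (Psi M N C q1) * Psi M N C q2)
         \<and> mat_adjoint (Psi M N C q1) * Psi M N C q2 \<in> carrier_mat M M"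
proof
  have carrier: "mat_adjoint (Psi M N C q1) * Psi M N C q2 \<in> carrier_mat M M"
    using mat_adjoint_carrier[OF Psi_carrier] Psi_carrier by (rule mult_carrier_mat)
  then show "circulant (mat_adjoint (Psi M N C q1) * Psi M N C q2)"
    by (rule circulantI[where f = "gram_kernel M N C q1 q2"]) (simp add: Psi_gram_entry gram_kernel_mod)
  show "mat_adjoint (Psi M N C q1) * Psi M N C q2 \<in> carrier_mat M M" by (fact carrier)
qed

end
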